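(* Let $\mathcal{M}$ be a von Neumann algebra with a faithful tracial state $\tau$, and let $U\in\mathcal{M}$ be a unitary. The following are equivalent: (1) $U=U^*$; (2) the operator $(U+iI)/\sqrt{2}$ is a unitary; (3) there exists a unitary $V\in\mathcal{M}$ such that $\sqrt{2}\,\operatorname{Re}\tau(U^*V)-\operatorname{Im}\tau(U-\sqrt{2}V)=2$. *)

theory Defs
  imports "HOL-Analysis.Analysis"
begin

class complex_inner = real_normed_vector +
  fixes scaleC :: "complex \<Rightarrow> 'a \<Rightarrow> 'a"
    and cinner :: "'a \<Rightarrow> 'a \<Rightarrow> complex"
  assumes scaleC_of_real: "scaleC (complex_of_real r) x = scaleR r x"
    and scaleC_add_right: "scaleC a (x + y) = scaleC a x + scaleC a y"
    and scaleC_add_left: "scaleC (a + b) x = scaleC a x + scaleC b x"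
    and scaleC_scaleC: "scaleC a (scaleC b x) = scaleC (a * b) x"
    and cinner_commute: "cinner x y = cnj (cinner y x)"
    and cinner_add_left: "cinner (x + y) z = cinner x z + cinner y z"
    and cinner_scaleC_left: "cinner (scaleC a x) y = cnj a * cinner x y"
    and cinner_norm: "cinner x x = complex_of_real ((norm x)\<^sup>2)"

class complex_hilbert = complex_inner + complete_space

definition bounded_op :: "('a::complex_inner \<Rightarrow> 'a) \<Rightarrow> bool" where
  "bounded_op T \<longleftrightarrow>
     (\<forall>x y. T (x + y) = T x + T y) \<and>
     (\<forall>c x. T (scaleC c x) = scaleC c (T x)) \<and>
     (\<exists>K. \<forall>x. norm (T x) \<le> K * norm x)"

definition adj :: "('a::complex_inner \<Rightarrow> 'a) \<Rightarrow> ('a \<Rightarrow> 'a)" where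
  "adj T = (THE S. \<forall>x y. cinner (T x) y = cinner x (S y))"

definition commutant :: "('a::complex_inner \<Rightarrow> 'a) set \<Rightarrow> ('a \<Rightarrow> 'a) set" where
  "commutant S = {T. bounded_op T \<and> (\<forall>A\<in>S. T \<circ> A = A \<circ> T)}"

definition von_neumann_algebra :: "('a::complex_hilbert \<Rightarrow> 'a) set \<Rightarrow> bool" where
  "von_neumann_algebra M \<longleftrightarrow>
     M \<subseteq> {T. bounded_op T} \<and>
     id \<in> M \<and>
     (\<forall>A\<in>M. \<forall>B\<in>M. (\<lambda>x. A x + B x) \<in> M) \<and>
     (\<forall>c. \<forall>A\<in>M. (\<lambda>x. scaleC c (A x)) \<in> M) \<and>
     (\<forall>A\<in>M. \<forall>B\<in>M. A \<circ> B \<in> M) \<and>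
     (\<forall>A\<in>M. adj A \<in> M) \<and>
     commutant (commutant M) = M"

definition faithful_tracial_state ::
  "('a::complex_hilbert \<Rightarrow> 'a) set \<Rightarrow> (('a \<Rightarrow> 'a) \<Rightarrow> complex) \<Rightarrow> bool" where
  "faithful_tracial_state M \<tau> \<longleftrightarrow>
     (\<forall>A\<in>M. \<forall>B\<in>M. \<tau> (\<lambda>x. A x + B x) = \<tau> A + \<tau> B) \<and>
     (\<forall>c. \<forall>A\<in>M. \<tau> (\<lambda>x. scaleC c (A x)) = c * \<tau> A) \<and>
     (\<forall>A\<in>M. Im (\<tau> (adj A \<circ> A)) = 0 \<and> Re (\<tau> (adj A \<circ> A)) \<ge> 0) \<and>
     \<tau> id = 1 \<and>
     (\<forall>A\<in>M. \<tau> (adj A \<circ> A) = 0 \<longrightarrow> A = (\<lambda>x. 0)) \<and>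
     (\<forall>A\<in>M. \<forall>B\<in>M. \<tau> (A \<circ> B) = \<tau> (B \<circ> A))"

definition unitary_op :: "('a::complex_inner \<Rightarrow> 'a) \<Rightarrow> bool" where
  "unitary_op U \<longleftrightarrow> bounded_op U \<and> adj U \<circ> U = id \<and> U \<circ> adj U = id"

end

theory Submission
  imports Defs
begin

(* Put W = (U + iI)/sqrt 2. For unitary U one computes W*W = WW* = I + (i/2)(U* - U), so W is
   unitary exactly when U is self-adjoint. For the trace condition put Y = sqrt 2 V - (U + iI);
   expanding with tau(U*U) = tau(V*V) = 1 gives
     tau(Y*Y) = 4 - 2 (sqrt 2 Re tau(U*V) - Im tau(U - sqrt 2 V)),
   so the condition says tau(Y*Y) = 0, i.e. by faithfulness V = W, and such a unitary V exists iff
   W is unitary.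

   Since adj is a definite description, its defining property must be established first: bounded
   operators have adjoints by the Riesz representation theorem, which follows from the existence
   of nearest points in closed convex sets (via the parallelogram law). *)

section \<open>Complex inner product spaces\<close>

interpretation complex_vector: vector_space "scaleC :: complex \<Rightarrow> 'a::complex_inner \<Rightarrow> 'a"
proof
  fix a b :: complex and x y :: 'a
  show "scaleC a (x + y) = scaleC a x + scaleC a y" by (rule scaleC_add_right)
  show "scaleC (a + b) x = scaleC a x + scaleC b x" by (rule scaleC_add_left)
  show "scaleC a (scaleC b x) = scaleC (a * b) x" by (rule scaleC_scaleC)
  show "scaleC 1 x = x" using scaleC_of_real[of 1 x] by simp
qed

lemma cinner_add_right: "cinner x (y + z) = cinner x y + cinner x z"
  by (metis cinner_commute cinner_add_left complex_cnj_add)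

lemma cinner_scaleC_right: "cinner x (scaleC a y) = a * cinner x y"
  by (metis cinner_commute cinner_scaleC_left complex_cnj_cnj complex_cnj_mult)

lemma cinner_zero_left: "cinner 0 y = 0"
  using cinner_add_left[of 0 0 y] by simp

lemma cinner_zero_right: "cinner x 0 = 0"
  using cinner_add_right[of x 0 0] by simp

lemma cinner_diff_left: "cinner (x - x') y = cinner x y - cinner x' y"
  using cinner_add_left[of "x - x'" x' y] by (simp add: eq_diff_eq)

lemma cinner_diff_right: "cinner x (y - y') = cinner x y - cinner x y'"
  using cinner_add_right[of x "y - y'" y'] by (simp add: eq_diff_eq)

lemmas cinner_simps = cinner_add_left cinner_add_right cinner_diff_left cinner_diff_right
  cinner_scaleC_left cinner_scaleC_right cinner_zero_left cinner_zero_right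

lemma cinner_self_eq_zero [simp]: "cinner x x = 0 \<longleftrightarrow> x = 0"
  by (simp add: cinner_norm)

lemma vector_eqI_cinner:
  assumes "\<And>z. cinner z u = cinner z v"
  shows "u = v"
proof -
  have "cinner (u - v) (u - v) = 0"
    using assms[of "u - v"] by (simp add: cinner_diff_right)
  then show ?thesis by simp
qed

lemma norm_scaleC: "norm (scaleC c x) = cmod c * norm x"
proof -
  have "cinner (scaleC c x) (scaleC c x) = cnj c * c * cinner x x"
    by (simp add: cinner_simps)
  then have "complex_of_real ((norm (scaleC c x))\<^sup>2) = cnj c * c * complex_of_real ((norm x)\<^sup>2)"
    by (simp only: cinner_norm)
  also have "\<dots> = complex_of_real ((cmod c * norm x)\<^sup>2)"
    by (simp add: complex_norm_square[unfolded of_real_power] power_mult_distrib mult.commute)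
  finally have "(norm (scaleC c x))\<^sup>2 = (cmod c * norm x)\<^sup>2"
    by (simp only: of_real_eq_iff)
  then show ?thesis
    by (simp add: power2_eq_iff_nonneg)
qed

lemma parallelogram_law:
  fixes a b :: "'a::complex_inner"
  shows "(norm (a - b))\<^sup>2 + (norm (a + b))\<^sup>2 = 2 * (norm a)\<^sup>2 + 2 * (norm b)\<^sup>2"
proof -
  have "cinner (a - b) (a - b) + cinner (a + b) (a + b) = 2 * cinner a a + 2 * cinner b b"
    by (simp add: cinner_simps algebra_simps)
  then have "complex_of_real ((norm (a - b))\<^sup>2 + (norm (a + b))\<^sup>2)
      = complex_of_real (2 * (norm a)\<^sup>2 + 2 * (norm b)\<^sup>2)"
    by (simp only: cinner_norm of_real_add of_real_mult of_real_numeral)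
  then show ?thesis
    by (simp only: of_real_eq_iff)
qed

lemma norm_diff_projection_square:
  fixes w y :: "'a::complex_inner"
  assumes "y \<noteq> 0"
  defines "c \<equiv> cinner y w / complex_of_real ((norm y)\<^sup>2)"
  shows "(norm (w - scaleC c y))\<^sup>2 = (norm w)\<^sup>2 - (cmod (cinner y w))\<^sup>2 / (norm y)\<^sup>2"
proof -
  have "cinner (w - scaleC c y) (w - scaleC c y)
      = cinner w w - c * cinner w y - cnj c * cinner y w + cnj c * c * cinner y y"
    by (simp add: cinner_simps algebra_simps)
  then have "complex_of_real ((norm (w - scaleC c y))\<^sup>2)
      = cinner w w - c * cinner w y - cnj c * cinner y w + cnj c * c * cinner y y"
    by (simp only: cinner_norm)
  also have "\<dots> = complex_of_real ((norm w)\<^sup>2 - (cmod (cinner y w))\<^sup>2 / (norm y)\<^sup>2)"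
    using assms(1)
    by (simp add: c_def cinner_norm cinner_commute[of w y] complex_norm_square[unfolded of_real_power] field_simps)
  finally show ?thesis
    using of_real_eq_iff by blast
qed

lemma norm_cinner_le: "cmod (cinner x y) \<le> norm x * norm y"
proof (cases "x = 0")
  case True
  then show ?thesis by (simp add: cinner_zero_left)
next
  case False
  have "0 \<le> (norm y)\<^sup>2 - (cmod (cinner x y))\<^sup>2 / (norm x)\<^sup>2"
    using norm_diff_projection_square[OF False, of y] by (metis zero_le_power2)
  then have "(cmod (cinner x y))\<^sup>2 \<le> (norm x * norm y)\<^sup>2"
    using False by (simp add: field_simps power_mult_distrib)
  then show ?thesis
    by (rule power2_le_imp_le) simp
qed

section \<open>The Riesz representation theorem\<close>

lemma convex_norm_diff_square_le:
  fixes K :: "'a::complex_inner set"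
  assumes "convex K" "a \<in> K" "b \<in> K"
  shows "(norm (a - b))\<^sup>2
    \<le> 2 * ((dist x a)\<^sup>2 - (infdist x K)\<^sup>2) + 2 * ((dist x b)\<^sup>2 - (infdist x K)\<^sup>2)"
proof -
  define m where "m = (1/2) *\<^sub>R a + (1/2) *\<^sub>R b"
  have "m \<in> K"
    unfolding m_def by (rule convexD[OF assms]) auto
  moreover have "(x - a) + (x - b) = 2 *\<^sub>R (x - m)"
    by (simp add: m_def scaleR_right_diff_distrib scaleR_right_distrib scaleR_2)
  ultimately have "2 * infdist x K \<le> norm ((x - a) + (x - b))"
    using infdist_le[of m K x] by (simp add: dist_norm)
  then have "(2 * infdist x K)\<^sup>2 \<le> (norm ((x - a) + (x - b)))\<^sup>2"
    by (rule power_mono) (simp add: infdist_nonneg)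
  moreover have "(norm (a - b))\<^sup>2 + (norm ((x - a) + (x - b)))\<^sup>2 = 2 * (dist x a)\<^sup>2 + 2 * (dist x b)\<^sup>2"
    using parallelogram_law[of "x - a" "x - b"] by (simp add: dist_norm norm_minus_commute)
  ultimately show ?thesis
    by (simp add: power_mult_distrib)
qed

lemma convex_minimizing_sequence_Cauchy:
  fixes K :: "'a::complex_inner set"
  assumes "convex K" and in_K: "\<And>n. ks n \<in> K"
    and minimizing: "\<And>n. (dist x (ks n))\<^sup>2 < (infdist x K)\<^sup>2 + inverse (Suc n)"
  shows "Cauchy ks"
proof (rule CauchyI)
  fix e :: real
  assume "0 < e"
  obtain N :: nat where "4 / e\<^sup>2 < real N"
    using reals_Archimedean2 by blast
  then have "4 / e\<^sup>2 < real (Suc N)"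
    by simp
  then have N: "4 * inverse (Suc N) < e\<^sup>2"
    using \<open>0 < e\<close> by (simp add: field_simps)
  have "norm (ks m - ks n) < e" if "N \<le> m" "N \<le> n" for m n
  proof -
    have "inverse (Suc m) \<le> inverse (Suc N)" "inverse (Suc n) \<le> inverse (Suc N)"
      using that by (simp_all add: le_imp_inverse_le)
    then have "(norm (ks m - ks n))\<^sup>2 < e\<^sup>2"
      using convex_norm_diff_square_le[OF \<open>convex K\<close> in_K in_K, of m n x]
        minimizing[of m] minimizing[of n] N by (smt (verit))
    then show ?thesis
      using \<open>0 < e\<close> by (simp add: power_less_imp_less_base)
  qed
  then show "\<exists>N. \<forall>m\<ge>N. \<forall>n\<ge>N. norm (ks m - ks n) < e"
    by blast
qed

lemma closed_convex_nearest_point_exists: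
  fixes K :: "'a::complex_hilbert set"
  assumes "closed K" "convex K" "K \<noteq> {}"
  obtains l where "l \<in> K" "\<And>k. k \<in> K \<Longrightarrow> dist x l \<le> dist x k"
proof -
  define d where "d = infdist x K"
  have "\<exists>k\<in>K. (dist x k)\<^sup>2 < d\<^sup>2 + inverse (Suc n)" for n
  proof -
    have "d < sqrt (d\<^sup>2 + inverse (Suc n))"
      by (rule real_less_rsqrt) simp
    then obtain k where "k \<in> K" "dist x k < sqrt (d\<^sup>2 + inverse (Suc n))"
      using assms(3) by (auto simp: d_def infdist_notempty cINF_less_iff)
    then have "(dist x k)\<^sup>2 < (sqrt (d\<^sup>2 + inverse (Suc n)))\<^sup>2"
      by (intro power_strict_mono) auto
    then show ?thesis
      using \<open>k \<in> K\<close> by auto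
  qed
  then obtain ks where in_K: "\<And>n. ks n \<in> K"
    and minimizing: "\<And>n. (dist x (ks n))\<^sup>2 < d\<^sup>2 + inverse (Suc n)"
    by metis
  obtain l where lim: "ks \<longlonglongrightarrow> l"
    using convex_minimizing_sequence_Cauchy[OF assms(2) in_K minimizing[unfolded d_def]]
    by (blast dest: Cauchy_convergent convergent_LIMSEQ_iff[THEN iffD1])
  have "l \<in> K"
    using closed_sequentially[OF assms(1) in_K lim] .
  moreover have "dist x l \<le> dist x k" if "k \<in> K" for k
  proof -
    have "(\<lambda>n. (dist x (ks n))\<^sup>2) \<longlonglongrightarrow> (dist x l)\<^sup>2"
      by (intro tendsto_intros lim)
    moreover have "(\<lambda>n. d\<^sup>2 + inverse (Suc n)) \<longlonglongrightarrow> d\<^sup>2"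
      using tendsto_add[OF tendsto_const LIMSEQ_inverse_real_of_nat, of "d\<^sup>2"] by simp
    ultimately have "(dist x l)\<^sup>2 \<le> d\<^sup>2"
      using minimizing by (intro LIMSEQ_le) (auto intro: less_imp_le)
    then have "dist x l \<le> d"
      using infdist_nonneg by (auto simp: d_def intro: power2_le_imp_le)
    then show ?thesis
      using infdist_le[OF that, of x] unfolding d_def by linarith
  qed
  ultimately show ?thesis
    using that by blast
qed

lemma nearest_point_orthogonal:
  fixes K :: "'a::complex_inner set"
  assumes "complex_vector.subspace K" "l \<in> K" "\<And>k. k \<in> K \<Longrightarrow> dist x l \<le> dist x k"
    and "y \<in> K"
  shows "cinner y (x - l) = 0"
proof (cases "y = 0")
  case True
  then show ?thesis by (simp add: cinner_zero_left)
next
  case False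
  define c where "c = cinner y (x - l) / complex_of_real ((norm y)\<^sup>2)"
  have "l + scaleC c y \<in> K"
    using assms by (simp add: complex_vector.subspace_add complex_vector.subspace_scale)
  then have "(norm (x - l))\<^sup>2 \<le> (norm ((x - l) - scaleC c y))\<^sup>2"
    using assms(3)[of "l + scaleC c y"] by (simp add: dist_norm power_mono diff_diff_eq)
  also have "\<dots> = (norm (x - l))\<^sup>2 - (cmod (cinner y (x - l)))\<^sup>2 / (norm y)\<^sup>2"
    unfolding c_def by (rule norm_diff_projection_square[OF False])
  finally have "(cmod (cinner y (x - l)))\<^sup>2 / (norm y)\<^sup>2 \<le> 0"
    by simp
  then show ?thesis
    using False by (simp add: divide_le_0_iff)
qed

lemma representation_by_kernel_orthogonal:
  fixes f :: "'a::complex_inner \<Rightarrow> complex"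
  assumes add: "\<And>x y. f (x + y) = f x + f y"
    and scaleC: "\<And>c x. f (scaleC c x) = c * f x"
    and "f w \<noteq> 0" and orthogonal: "\<And>y. f y = 0 \<Longrightarrow> cinner y w = 0"
  shows "f x = cinner (scaleC (cnj (f w) / complex_of_real ((norm w)\<^sup>2)) w) x"
proof -
  have "f (x - scaleC (f x / f w) w) = 0"
    using add[of "x - scaleC (f x / f w) w" "scaleC (f x / f w) w"] \<open>f w \<noteq> 0\<close>
    by (simp add: scaleC)
  then have "cinner w (x - scaleC (f x / f w) w) = 0"
    using orthogonal by (metis cinner_commute complex_cnj_zero)
  then have "cinner w x = f x / f w * cinner w w"
    by (simp add: cinner_simps)
  moreover have "w \<noteq> 0"
    using scaleC[of 0 w] \<open>f w \<noteq> 0\<close> by auto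
  ultimately show ?thesis
    using \<open>f w \<noteq> 0\<close> by (simp add: cinner_scaleC_left cinner_norm)
qed

lemma riesz_representation:
  fixes f :: "'a::complex_hilbert \<Rightarrow> complex"
  assumes add: "\<And>x y. f (x + y) = f x + f y"
    and scaleC: "\<And>c x. f (scaleC c x) = c * f x"
    and bounded: "\<And>x. cmod (f x) \<le> B * norm x"
  obtains z where "\<And>x. f x = cinner z x"
proof (cases "\<forall>x. f x = 0")
  case True
  then show ?thesis
    using that[of 0] by (simp add: cinner_zero_left)
next
  case False
  then obtain x1 where "f x1 \<noteq> 0"
    by blast
  have "bounded_linear f"
  proof (rule bounded_linear_intro)
    show "f (r *\<^sub>R x) = r *\<^sub>R f x" for r x
      using scaleC[of "complex_of_real r" x] by (simp add: scaleC_of_real scaleR_conv_of_real)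
    show "norm (f x) \<le> norm x * B" for x
      using bounded[of x] by (simp add: mult.commute)
  qed (rule add)
  then interpret f: bounded_linear f .
  define K where "K = f -` {0}"
  have "complex_vector.subspace K"
    by (simp add: K_def complex_vector.subspace_def f.zero add scaleC)
  moreover have "closed K" "convex K"
    unfolding K_def
    by (auto intro: continuous_closed_vimage convex_linear_vimage f.linear linear_continuous_at
        \<open>bounded_linear f\<close>)
  moreover have "0 \<in> K"
    using f.zero by (simp add: K_def)
  ultimately obtain l where "l \<in> K" and nearest: "\<And>k. k \<in> K \<Longrightarrow> dist x1 l \<le> dist x1 k"
    using closed_convex_nearest_point_exists by (metis empty_iff)
  have "f (x1 - l) \<noteq> 0"
    using \<open>f x1 \<noteq> 0\<close> \<open>l \<in> K\<close> by (simp add: K_def f.diff)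
  moreover have "cinner y (x1 - l) = 0" if "f y = 0" for y
    using nearest_point_orthogonal[OF \<open>complex_vector.subspace K\<close> \<open>l \<in> K\<close> nearest] that
    by (simp add: K_def)
  ultimately show ?thesis
    using representation_by_kernel_orthogonal[OF add scaleC] that by blast
qed

section \<open>Bounded operators and adjoints\<close>

lemma bounded_op_add: "bounded_op T \<Longrightarrow> T (x + y) = T x + T y"
  and bounded_op_scaleC: "bounded_op T \<Longrightarrow> T (scaleC c x) = scaleC c (T x)"
  unfolding bounded_op_def by blast+

lemma bounded_op_diff: "bounded_op T \<Longrightarrow> T (x - y) = T x - T y"
  using bounded_op_add[of T "x - y" y] by simp

lemma bounded_op_ident: "bounded_op (\<lambda>x. x)"
  unfolding bounded_op_def by (auto intro: exI[of _ 1])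

lemma bounded_op_plus_op:
  assumes "bounded_op A" "bounded_op B"
  shows "bounded_op (\<lambda>x. A x + B x)"
proof -
  obtain KA KB where KA: "\<And>x. norm (A x) \<le> KA * norm x" and KB: "\<And>x. norm (B x) \<le> KB * norm x"
    using assms unfolding bounded_op_def by metis
  show ?thesis
    unfolding bounded_op_def
  proof (intro conjI allI exI)
    show "A (x + y) + B (x + y) = A x + B x + (A y + B y)" for x y
      using assms by (simp add: bounded_op_add algebra_simps)
    show "A (scaleC c x) + B (scaleC c x) = scaleC c (A x + B x)" for c x
      using assms by (simp add: bounded_op_scaleC complex_vector.scale_right_distrib)
    show "norm (A x + B x) \<le> (KA + KB) * norm x" for x
      using norm_triangle_ineq[of "A x" "B x"] KA[of x] KB[of x] by (simp add: distrib_right)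
  qed
qed

lemma bounded_op_scaleC_op:
  assumes "bounded_op A"
  shows "bounded_op (\<lambda>x. scaleC c (A x))"
proof -
  obtain K where K: "\<And>x. norm (A x) \<le> K * norm x"
    using assms unfolding bounded_op_def by metis
  show ?thesis
    unfolding bounded_op_def
  proof (intro conjI allI exI)
    show "scaleC c (A (x + y)) = scaleC c (A x) + scaleC c (A y)" for x y
      using assms by (simp add: bounded_op_add complex_vector.scale_right_distrib)
    show "scaleC c (A (scaleC d x)) = scaleC d (scaleC c (A x))" for d x
      using assms by (simp add: bounded_op_scaleC mult.commute)
    show "norm (scaleC c (A x)) \<le> (cmod c * K) * norm x" for x
      using K[of x] by (simp add: norm_scaleC mult.assoc mult_left_mono)
  qed
qed

lemma adj_eqI:
  assumes "\<And>x y. cinner (T x) y = cinner x (S y)"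
  shows "adj T = S"
  unfolding adj_def
proof (rule the_equality)
  show "\<forall>x y. cinner (T x) y = cinner x (S y)"
    using assms by blast
next
  fix S'
  assume "\<forall>x y. cinner (T x) y = cinner x (S' y)"
  then have "cinner z (S' y) = cinner z (S y)" for y z
    using assms by simp
  then show "S' = S"
    by (auto intro: vector_eqI_cinner)
qed

lemma cinner_adj:
  fixes T :: "'a::complex_hilbert \<Rightarrow> 'a"
  assumes "bounded_op T"
  shows "cinner (T x) y = cinner x (adj T y)"
proof -
  obtain K where bound: "\<And>x. norm (T x) \<le> K * norm x"
    using assms unfolding bounded_op_def by metis
  have "\<exists>z. \<forall>x. cinner (T x) y = cinner x z" for y
  proof -
    have bound_y: "cmod (cinner y (T x)) \<le> (norm y * K) * norm x" for x
      using norm_cinner_le[of y "T x"] mult_left_mono[OF bound[of x], of "norm y"]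
      by (simp add: mult.assoc)
    obtain z where "\<And>x. cinner y (T x) = cinner z x"
      by (rule riesz_representation[of "\<lambda>x. cinner y (T x)" "norm y * K"])
        (simp_all add: bounded_op_add[OF assms] bounded_op_scaleC[OF assms] cinner_simps bound_y)
    then show ?thesis
      by (metis cinner_commute)
  qed
  then obtain S where "\<And>x y. cinner (T x) y = cinner x (S y)"
    by metis
  moreover from this have "adj T = S"
    by (rule adj_eqI)
  ultimately show ?thesis
    by simp
qed

lemma adj_add:
  fixes T :: "'a::complex_hilbert \<Rightarrow> 'a"
  shows "bounded_op T \<Longrightarrow> adj T (x + y) = adj T x + adj T y"
  by (rule vector_eqI_cinner) (simp add: cinner_adj[symmetric] cinner_simps)

lemma adj_scaleC:
  fixes T :: "'a::complex_hilbert \<Rightarrow> 'a"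
  shows "bounded_op T \<Longrightarrow> adj T (scaleC c x) = scaleC c (adj T x)"
  by (rule vector_eqI_cinner) (simp add: cinner_adj[symmetric] cinner_simps)

lemma adj_ident: "adj (\<lambda>x. x) = (\<lambda>x. x)"
  by (rule adj_eqI) simp

lemma adj_plus_op:
  fixes A B :: "'a::complex_hilbert \<Rightarrow> 'a"
  shows "bounded_op A \<Longrightarrow> bounded_op B \<Longrightarrow> adj (\<lambda>x. A x + B x) = (\<lambda>x. adj A x + adj B x)"
  by (rule adj_eqI) (simp add: cinner_adj cinner_simps)

lemma adj_scaleC_op:
  fixes A :: "'a::complex_hilbert \<Rightarrow> 'a"
  shows "bounded_op A \<Longrightarrow> adj (\<lambda>x. scaleC c (A x)) = (\<lambda>x. scaleC (cnj c) (adj A x))"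
  by (rule adj_eqI) (simp add: cinner_adj cinner_simps)

lemma unitary_opD:
  assumes "unitary_op U"
  shows "bounded_op U" "adj U (U x) = x" "U (adj U x) = x"
  using assms unfolding unitary_op_def by (auto simp: fun_eq_iff)

lemma selfadjoint_iff_unitary_plus_i:
  fixes U :: "'a::complex_hilbert \<Rightarrow> 'a"
  assumes "unitary_op U"
  shows "U = adj U \<longleftrightarrow> unitary_op (\<lambda>x. scaleC (complex_of_real (1 / sqrt 2)) (U x + scaleC \<i> x))"
proof -
  define a where "a = complex_of_real (1 / sqrt 2)"
  define W where "W = (\<lambda>x. scaleC a (U x + scaleC \<i> x))"
  define W' where "W' = (\<lambda>x. scaleC a (adj U x - scaleC \<i> x))"
  have a: "cnj a = a" "a * a = 1 / 2"
    unfolding a_def of_real_mult[symmetric] by simp_all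
  note U = unitary_opD[OF assms]
  have "bounded_op W"
    unfolding W_def by (intro bounded_op_scaleC_op bounded_op_plus_op U bounded_op_ident)
  have "adj W = W'"
    unfolding W_def W'_def by (rule adj_eqI) (simp add: cinner_simps cinner_adj[OF U(1)] a algebra_simps)
  have "W' (W x) = x + scaleC (\<i> / 2) (adj U x - U x)" for x
  proof (rule vector_eqI_cinner)
    show "cinner z (W' (W x)) = cinner z (x + scaleC (\<i> / 2) (adj U x - U x))" for z
      unfolding W_def W'_def
      by (simp add: U adj_add adj_scaleC cinner_simps) (use a(2) i_squared in algebra)
  qed
  moreover have "W (W' x) = x + scaleC (\<i> / 2) (adj U x - U x)" for x
  proof (rule vector_eqI_cinner)
    show "cinner z (W (W' x)) = cinner z (x + scaleC (\<i> / 2) (adj U x - U x))" for z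
      unfolding W_def W'_def
      by (simp add: U bounded_op_add bounded_op_diff bounded_op_scaleC cinner_simps)
        (use a(2) i_squared in algebra)
  qed
  ultimately have "unitary_op W \<longleftrightarrow> (\<forall>x. adj U x = U x)"
    using \<open>bounded_op W\<close> \<open>adj W = W'\<close> by (simp add: unitary_op_def fun_eq_iff)
  then show ?thesis
    unfolding W_def a_def by (auto simp: fun_eq_iff)
qed

section \<open>The trace inner product\<close>

locale tracial_von_neumann_algebra =
  fixes M :: "('a::complex_hilbert \<Rightarrow> 'a) set"
    and \<tau> :: "('a \<Rightarrow> 'a) \<Rightarrow> complex"
  assumes von_neumann_algebra: "von_neumann_algebra M"
    and faithful_tracial_state: "faithful_tracial_state M \<tau>"
begin

lemma bounded_op_of_mem: "A \<in> M \<Longrightarrow> bounded_op A"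
  and plus_mem: "A \<in> M \<Longrightarrow> B \<in> M \<Longrightarrow> (\<lambda>x. A x + B x) \<in> M"
  and scaleC_mem: "A \<in> M \<Longrightarrow> (\<lambda>x. scaleC c (A x)) \<in> M"
  and comp_mem: "A \<in> M \<Longrightarrow> B \<in> M \<Longrightarrow> A \<circ> B \<in> M"
  and adj_mem: "A \<in> M \<Longrightarrow> adj A \<in> M"
  and ident_mem: "(\<lambda>x. x) \<in> M"
  using von_neumann_algebra unfolding von_neumann_algebra_def id_def by blast+

lemma trace_plus: "A \<in> M \<Longrightarrow> B \<in> M \<Longrightarrow> \<tau> (\<lambda>x. A x + B x) = \<tau> A + \<tau> B"
  and trace_scaleC: "A \<in> M \<Longrightarrow> \<tau> (\<lambda>x. scaleC c (A x)) = c * \<tau> A"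
  and trace_ident: "\<tau> (\<lambda>x. x) = 1"
  and trace_adj_comp_self_real: "A \<in> M \<Longrightarrow> Im (\<tau> (adj A \<circ> A)) = 0"
  and trace_faithful: "A \<in> M \<Longrightarrow> \<tau> (adj A \<circ> A) = 0 \<Longrightarrow> A = (\<lambda>x. 0)"
  using faithful_tracial_state unfolding faithful_tracial_state_def id_def by blast+

lemmas mem_intros = plus_mem scaleC_mem comp_mem adj_mem ident_mem

definition trace_inner :: "('a \<Rightarrow> 'a) \<Rightarrow> ('a \<Rightarrow> 'a) \<Rightarrow> complex"
  where "trace_inner A B = \<tau> (adj A \<circ> B)"

lemma trace_inner_plus_right:
  assumes "A \<in> M" "B \<in> M" "C \<in> M"
  shows "trace_inner A (\<lambda>x. B x + C x) = trace_inner A B + trace_inner A C"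
proof -
  have "adj A \<circ> (\<lambda>x. B x + C x) = (\<lambda>x. (adj A \<circ> B) x + (adj A \<circ> C) x)"
    using bounded_op_of_mem[OF assms(1)] by (simp add: comp_def adj_add)
  then show ?thesis
    unfolding trace_inner_def by (simp only:) (intro trace_plus mem_intros assms)
qed

lemma trace_inner_scaleC_right:
  assumes "A \<in> M" "B \<in> M"
  shows "trace_inner A (\<lambda>x. scaleC c (B x)) = c * trace_inner A B"
proof -
  have "adj A \<circ> (\<lambda>x. scaleC c (B x)) = (\<lambda>x. scaleC c ((adj A \<circ> B) x))"
    using bounded_op_of_mem[OF assms(1)] by (simp add: comp_def adj_scaleC)
  then show ?thesis
    unfolding trace_inner_def by (simp only:) (intro trace_scaleC mem_intros assms)
qed

lemma trace_inner_plus_left: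
  assumes "A \<in> M" "B \<in> M" "C \<in> M"
  shows "trace_inner (\<lambda>x. A x + B x) C = trace_inner A C + trace_inner B C"
proof -
  have "adj (\<lambda>x. A x + B x) \<circ> C = (\<lambda>x. (adj A \<circ> C) x + (adj B \<circ> C) x)"
    using assms by (simp add: comp_def adj_plus_op bounded_op_of_mem)
  then show ?thesis
    unfolding trace_inner_def by (simp only:) (intro trace_plus mem_intros assms)
qed

lemma trace_inner_scaleC_left:
  assumes "A \<in> M" "B \<in> M"
  shows "trace_inner (\<lambda>x. scaleC c (A x)) B = cnj c * trace_inner A B"
proof -
  have "adj (\<lambda>x. scaleC c (A x)) \<circ> B = (\<lambda>x. scaleC (cnj c) ((adj A \<circ> B) x))"
    using assms by (simp add: comp_def adj_scaleC_op bounded_op_of_mem)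
  then show ?thesis
    unfolding trace_inner_def by (simp only:) (intro trace_scaleC mem_intros assms)
qed

lemma diff_mem: "A \<in> M \<Longrightarrow> B \<in> M \<Longrightarrow> (\<lambda>x. A x - B x) \<in> M"
  using plus_mem[of A "\<lambda>x. scaleC (-1) (B x)"] scaleC_mem[of B "-1"] by simp

lemma trace_inner_diff_left:
  assumes "A \<in> M" "B \<in> M" "C \<in> M"
  shows "trace_inner (\<lambda>x. A x - B x) C = trace_inner A C - trace_inner B C"
  using trace_inner_plus_left[OF assms(1) scaleC_mem[OF assms(2)] assms(3), of "-1"]
    trace_inner_scaleC_left[OF assms(2,3), of "-1"] by simp

lemma trace_inner_diff_right:
  assumes "A \<in> M" "B \<in> M" "C \<in> M"
  shows "trace_inner A (\<lambda>x. B x - C x) = trace_inner A B - trace_inner A C"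
  using trace_inner_plus_right[OF assms(1,2) scaleC_mem[OF assms(3)], of "-1"]
    trace_inner_scaleC_right[OF assms(1,3), of "-1"] by simp

lemmas trace_inner_expand = trace_inner_plus_left trace_inner_plus_right
  trace_inner_diff_left trace_inner_diff_right trace_inner_scaleC_left trace_inner_scaleC_right

lemma trace_inner_commute:
  assumes "A \<in> M" "B \<in> M"
  shows "trace_inner B A = cnj (trace_inner A B)"
proof -
  have "Im (trace_inner C C) = 0" if "C \<in> M" for C
    using that unfolding trace_inner_def by (rule trace_adj_comp_self_real)
  \<comment> \<open>polarization with \<open>A + B\<close> and \<open>A + iB\<close>\<close>
  from this[of "\<lambda>x. A x + B x"] this[of "\<lambda>x. A x + scaleC \<i> (B x)"] this[of A] this[of B]
  have "Im (trace_inner A B + trace_inner B A) = 0" "Re (trace_inner A B - trace_inner B A) = 0"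
    using assms by (simp_all add: trace_inner_expand mem_intros)
  then show ?thesis
    by (simp add: complex_eq_iff)
qed

lemma trace_inner_ident_left: "trace_inner (\<lambda>x. x) A = \<tau> A"
  by (simp add: trace_inner_def adj_ident comp_def)

lemma trace_inner_ident_right: "A \<in> M \<Longrightarrow> trace_inner A (\<lambda>x. x) = cnj (\<tau> A)"
  using trace_inner_commute[of "\<lambda>x. x" A] by (simp add: ident_mem trace_inner_ident_left)

lemma trace_inner_unitary: "unitary_op A \<Longrightarrow> trace_inner A A = 1"
  by (simp add: trace_inner_def unitary_op_def trace_ident id_def)

lemma zero_mem: "(\<lambda>x. 0) \<in> M"
  using scaleC_mem[OF ident_mem, of 0] by simp

lemma trace_inner_zero: "trace_inner (\<lambda>x. 0) (\<lambda>x. 0) = 0"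
  using trace_inner_scaleC_left[OF zero_mem zero_mem, of 0] by simp

end

context tracial_von_neumann_algebra
begin

lemma trace_inner_defect:
  assumes "U \<in> M" "V \<in> M" "unitary_op U" "unitary_op V"
  defines "Y \<equiv> \<lambda>x. scaleC (complex_of_real (sqrt 2)) (V x) - (U x + scaleC \<i> x)"
  shows "trace_inner Y Y = complex_of_real (4 - 2 * (sqrt 2 * Re (\<tau> (adj U \<circ> V))
           - Im (\<tau> (\<lambda>x. U x - scaleC (complex_of_real (sqrt 2)) (V x)))))"
proof -
  have "\<tau> (\<lambda>x. U x - scaleC (complex_of_real (sqrt 2)) (V x))
      = \<tau> U - complex_of_real (sqrt 2) * \<tau> V"
    using trace_plus[OF assms(1) scaleC_mem[OF assms(2)], of "- complex_of_real (sqrt 2)"]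
      trace_scaleC[OF assms(2), of "- complex_of_real (sqrt 2)"] by simp
  moreover have "trace_inner V U = cnj (trace_inner U V)"
    using assms(1,2) by (rule trace_inner_commute)
  ultimately show ?thesis
    using assms(1-4) unfolding Y_def
    by (simp add: trace_inner_expand mem_intros diff_mem trace_inner_unitary trace_inner_ident_left
        trace_inner_ident_right)
      (simp add: trace_scaleC trace_ident mem_intros trace_inner_def complex_eq_iff algebra_simps)
qed

lemma trace_condition_iff_eq_plus_i:
  assumes "U \<in> M" "V \<in> M" "unitary_op U" "unitary_op V"
  shows "sqrt 2 * Re (\<tau> (adj U \<circ> V))
           - Im (\<tau> (\<lambda>x. U x - scaleC (complex_of_real (sqrt 2)) (V x))) = 2
    \<longleftrightarrow> V = (\<lambda>x. scaleC (complex_of_real (1 / sqrt 2)) (U x + scaleC \<i> x))"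
proof -
  define Y where "Y = (\<lambda>x. scaleC (complex_of_real (sqrt 2)) (V x) - (U x + scaleC \<i> x))"
  have "Y \<in> M"
    unfolding Y_def using assms(1,2) by (intro diff_mem mem_intros)
  have "sqrt 2 * Re (\<tau> (adj U \<circ> V))
          - Im (\<tau> (\<lambda>x. U x - scaleC (complex_of_real (sqrt 2)) (V x))) = 2
      \<longleftrightarrow> trace_inner Y Y = 0"
    unfolding Y_def trace_inner_defect[OF assms] of_real_eq_0_iff by auto
  also have "\<dots> \<longleftrightarrow> Y = (\<lambda>x. 0)"
    using trace_faithful[OF \<open>Y \<in> M\<close>] trace_inner_zero unfolding trace_inner_def by blast
  also have "\<dots> \<longleftrightarrow> V = (\<lambda>x. scaleC (complex_of_real (1 / sqrt 2)) (U x + scaleC \<i> x))"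
  proof -
    have "scaleC (complex_of_real (sqrt 2)) v - w = 0
        \<longleftrightarrow> v = scaleC (complex_of_real (1 / sqrt 2)) w" for v w :: 'a
      by auto
    then show ?thesis
      unfolding Y_def fun_eq_iff by simp
  qed
  finally show ?thesis .
qed

lemma selfadjoint_iff_trace_condition:
  assumes "U \<in> M" "unitary_op U"
  shows "U = adj U \<longleftrightarrow>
    (\<exists>V\<in>M. unitary_op V \<and>
       sqrt 2 * Re (\<tau> (adj U \<circ> V))
         - Im (\<tau> (\<lambda>x. U x - scaleC (complex_of_real (sqrt 2)) (V x))) = 2)"
proof -
  define W where "W = (\<lambda>x. scaleC (complex_of_real (1 / sqrt 2)) (U x + scaleC \<i> x))"
  have "W \<in> M"
    unfolding W_def using assms(1) by (intro mem_intros)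
  then have "(\<exists>V\<in>M. unitary_op V \<and>
       sqrt 2 * Re (\<tau> (adj U \<circ> V))
         - Im (\<tau> (\<lambda>x. U x - scaleC (complex_of_real (sqrt 2)) (V x))) = 2) \<longleftrightarrow> unitary_op W"
    using trace_condition_iff_eq_plus_i[OF assms(1) _ assms(2)] unfolding W_def by blast
  then show ?thesis
    using selfadjoint_iff_unitary_plus_i[OF assms(2)] unfolding W_def by simp
qed

end

theorem lemma2p1:
  fixes M :: "('a::complex_hilbert \<Rightarrow> 'a) set"
    and \<tau> :: "('a \<Rightarrow> 'a) \<Rightarrow> complex"
    and U :: "'a \<Rightarrow> 'a"
  assumes "von_neumann_algebra M"
    and "faithful_tracial_state M \<tau>"
    and "U \<in> M" and "unitary_op U"
  shows "(U = adj U \<longleftrightarrow>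
            unitary_op (\<lambda>x. scaleC (complex_of_real (1 / sqrt 2)) (U x + scaleC \<i> x)))
       \<and> (U = adj U \<longleftrightarrow>
            (\<exists>V\<in>M. unitary_op V \<and>
               sqrt 2 * Re (\<tau> (adj U \<circ> V))
                 - Im (\<tau> (\<lambda>x. U x - scaleC (complex_of_real (sqrt 2)) (V x))) = 2))"
proof -
  interpret tracial_von_neumann_algebra M \<tau>
    using assms(1,2) by unfold_locales
  show ?thesis
    using selfadjoint_iff_unitary_plus_i[OF assms(4)]
      selfadjoint_iff_trace_condition[OF assms(3,4)] by blast
qed

end
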